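(* Let $J_1,J_2,k_1,k_2,h,E_1,E_2>0$ and $T_s>0$, and consider the batch reactor system $$\dot c_A=-k_1e^{-E_1/T}c_A,\quad \dot c_B=k_1e^{-E_1/T}c_A-k_2e^{-E_2/T}c_B,\quad \dot T=J_1k_1e^{-E_1/T}c_A+J_2k_2e^{-E_2/T}c_B+h(T_s-T),$$ with output $T$, on the state set $D\times\Omega$ where $D=(0,\bar c_A)\times(0,\bar c_B)$, $\Omega=(T_{\min},T_{\max})$, and the constants satisfy $\bar c_A>0$, $0<T_{\min}\le T_s$, $\frac{k_1}{k_2}\bar c_A<\bar c_B$ if $E_1\ge E_2$ and $\frac{k_1}{k_2}e^{(E_2-E_1)/T_{\min}}\bar c_A<\bar c_B$ if $E_1<E_2$, and $\frac{J_1k_1\bar c_A+J_2k_2\bar c_B}{h}+T_s\le T_{\max}$. (Then $D\times\Omega$ is positively invariant and solutions exist and are unique for all $t\ge0$.) Assume one of the following: (A1) if $E_1=E_2$ then $(J_1+J_2)k_2\ne J_1k_1$; if $E_1\ne E_2$ then there exists $a>0$ such that for all $T\in(T_{\min},T_{\max})$ with $\frac{T^2}{(E_2-E_1)J_1h}e^{-E_2/T}\big[(J_1+J_2)k_2-J_1k_1e^{(E_2-E_1)/T}\big]+T>T_s$ one has $\frac{T^2}{(E_2-E_1)J_1}e^{-E_2/T}\big[(J_1+J_2)k_2-J_1k_1e^{(E_2-E_1)/T}\big]\le -a$; (A2) the same as (A1) but with the last inequality replaced by $\frac{T^2}{(E_2-E_1)J_1}e^{-E_2/T}\big[(J_1+J_2)k_2-J_1k_1e^{(E_2-E_1)/T}\big]\ge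 a$. Then the system is strongly observable in time $r$ for every $r>0$ if $E_1=E_2$, and for every $r\ge\frac{T_{\max}-T_{\min}}{a}$ if $E_1\ne E_2$; that is, for any two distinct initial states in $D\times\Omega$, the corresponding temperature outputs $T(\cdot)$ differ at some time in $[0,r]$.
   Context: Strong observability in time $r$ here means: for every pair of initial states $(c_{A,0},c_{B,0},T_0)\neq(\tilde c_{A,0},\tilde c_{B,0},\tilde T_0)$ in $D\times\Omega$, $\max_{t\in[0,r]}|T(t)-\tilde T(t)|>0$, where $T(\cdot),\tilde T(\cdot)$ are the temperature components of the corresponding solutions (the system has no control input). *)

theory Defs
  imports "HOL-Analysis.Analysis"
begin

definition batch_solution ::
  "real \<Rightarrow> real \<Rightarrow> real \<Rightarrow> real \<Rightarrow> real \<Rightarrow> real \<Rightarrow> real \<Rightarrow> real \<Rightarrow> real \<Rightarrow>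
   (real \<Rightarrow> real) \<Rightarrow> (real \<Rightarrow> real) \<Rightarrow> (real \<Rightarrow> real) \<Rightarrow> bool" where
  "batch_solution J1 J2 k1 k2 h E1 E2 Ts r cA cB T \<longleftrightarrow>
     (\<forall>t\<in>{0..r}.
        (cA has_real_derivative (- k1 * exp (- E1 / T t) * cA t)) (at t within {0..r}) \<and>
        (cB has_real_derivative (k1 * exp (- E1 / T t) * cA t - k2 * exp (- E2 / T t) * cB t))
           (at t within {0..r}) \<and>
        (T has_real_derivative (J1 * k1 * exp (- E1 / T t) * cA t + J2 * k2 * exp (- E2 / T t) * cB t
                                 + h * (Ts - T t))) (at t within {0..r}))"

definition reactor_G :: "real \<Rightarrow> real \<Rightarrow> real \<Rightarrow> real \<Rightarrow> real \<Rightarrow> real \<Rightarrow> real \<Rightarrow> real" where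
  "reactor_G J1 J2 k1 k2 E1 E2 \<theta> =
     \<theta>\<^sup>2 / ((E2 - E1) * J1) * exp (- E2 / \<theta>) * ((J1 + J2) * k2 - J1 * k1 * exp ((E2 - E1) / \<theta>))"

end

theory Submission
  imports Defs
begin

text \<open>
  Solutions stay in the box \<open>D \<times> \<Omega>\<close>: every bound is the positivity of some \<open>z\<close> with
  \<open>z' + g z \<ge> 0\<close>, which is preserved by the integrating factor \<open>exp (\<integral> g)\<close>.

  If two solutions had the same temperature on \<open>[0, r]\<close>, the temperature equation forces the heat
  release of the differences \<open>x = cA - cA'\<close>, \<open>y = cB - cB'\<close> to vanish:
  \<open>J1 \<alpha> x + J2 \<beta> y = 0\<close> with Arrhenius rates \<open>\<alpha>, \<beta>\<close>; moreover \<open>x' = -\<alpha> x\<close>, so \<open>x\<close> never vanishes.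
  Differentiating the identity once more gives, for \<open>E1 = E2\<close>, the contradiction
  \<open>(J1 + J2) k2 = J1 k1\<close>, and for \<open>E1 \<noteq> E2\<close> the closed equation \<open>T' = G(T)\<close>. Since
  \<open>T' > h (Ts - T)\<close> along solutions, (A1)/(A2) give \<open>|T'| \<ge> a\<close>, so \<open>T\<close> would cross the whole
  interval \<open>(Tmin, Tmax)\<close> within time \<open>(Tmax - Tmin) / a \<le> r\<close>, which is impossible.
\<close>

lemma DERIV_within_nonneg_imp_nondecreasing:
  fixes f f' :: "real \<Rightarrow> real"
  assumes der: "\<And>x. x \<in> {a..b} \<Longrightarrow> (f has_real_derivative f' x) (at x within {a..b})"
    and nonneg: "\<And>x. x \<in> {a..b} \<Longrightarrow> f' x \<ge> 0"
    and t: "t \<in> {a..b}"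
  shows "f a \<le> f t"
proof -
  have "\<exists>x\<in>{a..t}. f t - f a = f' x * (t - a)"
  proof (rule mvt_very_simple)
    fix x assume "a \<le> x" "x \<le> t"
    with t have "(f has_real_derivative f' x) (at x within {a..t})"
      by (intro DERIV_subset[OF der]) auto
    then show "(f has_derivative (\<lambda>h. f' x * h)) (at x within {a..t})"
      by (simp add: has_field_derivative_def)
  qed (use t in auto)
  then obtain x where "x \<in> {a..t}" "f t - f a = f' x * (t - a)" by blast
  moreover have "f' x * (t - a) \<ge> 0"
    using t \<open>x \<in> {a..t}\<close> nonneg[of x] by simp
  ultimately show ?thesis by simp
qed

lemma pos_if_linear_diff_ineq:
  fixes y y' g :: "real \<Rightarrow> real"
  assumes der: "\<And>t. t \<in> {a..b} \<Longrightarrow> (y has_real_derivative y' t) (at t within {a..b})"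
    and g: "continuous_on {a..b} g"
    and ineq: "\<And>t. t \<in> {a..b} \<Longrightarrow> y' t + g t * y t \<ge> 0"
    and y0: "y a > 0" and t: "t \<in> {a..b}"
  shows "y t > 0"
proof -
  define w where "w u = exp (integral {a..u} g)" for u
  have "y a * w a \<le> y t * w t"
  proof (rule DERIV_within_nonneg_imp_nondecreasing[where f = "\<lambda>u. y u * w u"])
    fix u assume u: "u \<in> {a..b}"
    have "(w has_real_derivative w u * g u) (at u within {a..b})"
      unfolding w_def by (rule DERIV_chain2[OF DERIV_exp integral_has_real_derivative[OF g u]])
    from DERIV_mult[OF der[OF u] this]
    show "((\<lambda>u. y u * w u) has_real_derivative (y' u + g u * y u) * w u) (at u within {a..b})"
      by (simp add: algebra_simps)
    show "(y' u + g u * y u) * w u \<ge> 0"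
      using ineq[OF u] by (simp add: w_def)
  qed (fact t)
  with y0 have "y t * w t > 0" by (simp add: w_def)
  then show ?thesis by (simp add: w_def zero_less_mult_iff)
qed

lemma nonzero_if_linear_ode:
  fixes y g :: "real \<Rightarrow> real"
  assumes der: "\<And>t. t \<in> {a..b} \<Longrightarrow> (y has_real_derivative - g t * y t) (at t within {a..b})"
    and g: "continuous_on {a..b} g" and y0: "y a \<noteq> 0" and t: "t \<in> {a..b}"
  shows "y t \<noteq> 0"
proof (cases "y a > 0")
  case True
  then show ?thesis by (intro less_imp_neq[symmetric] pos_if_linear_diff_ineq[OF der g _ _ t]) auto
next
  case False
  with y0 have "- y a > 0" by simp
  have "- y t > 0"
    by (rule pos_if_linear_diff_ineq[where y = "\<lambda>t. - y t", OF _ g _ \<open>- y a > 0\<close> t])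
      (auto intro!: derivative_eq_intros der)
  then show ?thesis by simp
qed

lemma range_ge_if_deriv_bounded_away:
  fixes f f' :: "real \<Rightarrow> real"
  assumes der: "\<And>t. t \<in> {a..b} \<Longrightarrow> (f has_real_derivative f' t) (at t within {a..b})"
    and bound: "(\<forall>t\<in>{a..b}. f' t \<le> - c) \<or> (\<forall>t\<in>{a..b}. f' t \<ge> c)" and "a \<le> b"
  shows "c * (b - a) \<le> \<bar>f b - f a\<bar>"
  using bound
proof
  assume "\<forall>t\<in>{a..b}. f' t \<le> - c"
  then have "- f a - c * a \<le> - f b - c * b"
    using \<open>a \<le> b\<close> by (intro DERIV_within_nonneg_imp_nondecreasing[where f = "\<lambda>t. - f t - c * t"])
      (auto intro!: derivative_eq_intros der simp: add.commute le_minus_iff)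
  then show ?thesis by (simp add: algebra_simps)
next
  assume "\<forall>t\<in>{a..b}. f' t \<ge> c"
  then have "f a - c * a \<le> f b - c * b"
    using \<open>a \<le> b\<close> by (intro DERIV_within_nonneg_imp_nondecreasing[where f = "\<lambda>t. f t - c * t"])
      (auto intro!: derivative_eq_intros der)
  then show ?thesis by (simp add: algebra_simps)
qed

lemma at_within_Icc_nontrivial:
  fixes a b t :: real
  shows "a < b \<Longrightarrow> t \<in> {a..b} \<Longrightarrow> at t within {a..b} \<noteq> bot"
  by (simp add: trivial_limit_within)

text \<open>A first-exit argument: \<open>f\<close> cannot reach \<open>0\<close> without first taking the value \<open>c\<close>.\<close>

lemma continuous_on_stays_above:
  fixes f :: "real \<Rightarrow> real"
  assumes f: "continuous_on {a..b} f" and c: "0 < c" "c < f a"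
    and step: "\<And>s. s \<in> {a..b} \<Longrightarrow> \<forall>u\<in>{a..s}. f u > 0 \<Longrightarrow> f s > c"
    and t: "t \<in> {a..b}"
  shows "f t > c"
proof -
  have "\<forall>u\<in>{a..b}. f u > 0"
  proof (rule ccontr)
    assume "\<not> (\<forall>u\<in>{a..b}. f u > 0)"
    define K where "K = {a..b} \<inter> f -` {..0}"
    have "K \<noteq> {}" "bdd_below K" "closed K"
      using \<open>\<not> (\<forall>u\<in>{a..b}. f u > 0)\<close> continuous_closed_preimage[OF f]
      by (auto simp: K_def not_less bdd_below_def)
    then have "Inf K \<in> K" by (rule closed_contains_Inf)
    then have s0: "a \<le> Inf K" "Inf K \<le> b" "f (Inf K) \<le> 0" by (auto simp: K_def)
    have "continuous_on {a..Inf K} f" using f s0 by (auto intro: continuous_on_subset)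
    with s0 c obtain x where x: "a \<le> x" "x \<le> Inf K" "f x = c"
      using IVT2'[of f "Inf K" c a] by auto
    have "x < Inf K" using x s0 c by (cases "x = Inf K") auto
    have "f u > 0" if "u \<in> {a..x}" for u
    proof (rule ccontr)
      assume "\<not> f u > 0"
      with that x s0 have "u \<in> K" by (auto simp: K_def)
      then have "Inf K \<le> u" using \<open>bdd_below K\<close> by (rule cInf_lower)
      with that \<open>x < Inf K\<close> show False by auto
    qed
    with step[of x] x s0 show False by auto
  qed
  with step t show ?thesis by auto
qed

definition arrhenius :: "real \<Rightarrow> real \<Rightarrow> real \<Rightarrow> real" where
  "arrhenius k E \<theta> = k * exp (- E / \<theta>)"

lemma arrhenius_pos: "k > 0 \<Longrightarrow> arrhenius k E \<theta> > 0"
  by (simp add: arrhenius_def)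

lemma arrhenius_le: "k \<ge> 0 \<Longrightarrow> E \<ge> 0 \<Longrightarrow> \<theta> > 0 \<Longrightarrow> arrhenius k E \<theta> \<le> k"
  by (simp add: arrhenius_def mult_left_le)

lemma arrhenius_shift_activation: "arrhenius k E \<theta> = arrhenius k E' \<theta> * exp ((E' - E) / \<theta>)"
  by (simp add: arrhenius_def mult.assoc exp_add[symmetric] diff_divide_distrib)

lemma continuous_on_arrhenius:
  "continuous_on S T \<Longrightarrow> (\<And>t. t \<in> S \<Longrightarrow> T t \<noteq> 0) \<Longrightarrow> continuous_on S (\<lambda>t. arrhenius k E (T t))"
  unfolding arrhenius_def by (intro continuous_intros) auto

lemma has_real_derivative_arrhenius:
  assumes "(T has_real_derivative D) (at t within S)" "T t \<noteq> 0"
  shows "((\<lambda>u. arrhenius k E (T u)) has_real_derivative arrhenius k E (T t) * (E * D / T t ^ 2))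
           (at t within S)"
  unfolding arrhenius_def using assms
  by (auto intro!: derivative_eq_intros simp: power2_eq_square field_simps)

lemma reactor_G_arrhenius:
  "reactor_G J1 J2 k1 k2 E1 E2 \<theta> =
     \<theta>\<^sup>2 / ((E2 - E1) * J1) * ((J1 + J2) * arrhenius k2 E2 \<theta> - J1 * arrhenius k1 E1 \<theta>)"
  unfolding reactor_G_def arrhenius_shift_activation[of k1 E1 _ E2]
  by (simp add: arrhenius_def right_diff_distrib diff_divide_distrib mult_ac)

lemma batch_solution_arrhenius:
  "batch_solution J1 J2 k1 k2 h E1 E2 Ts r cA cB T \<longleftrightarrow>
     (\<forall>t\<in>{0..r}.
        (cA has_real_derivative - arrhenius k1 E1 (T t) * cA t) (at t within {0..r}) \<and>
        (cB has_real_derivative arrhenius k1 E1 (T t) * cA t - arrhenius k2 E2 (T t) * cB t)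
          (at t within {0..r}) \<and>
        (T has_real_derivative J1 * arrhenius k1 E1 (T t) * cA t + J2 * arrhenius k2 E2 (T t) * cB t
                                + h * (Ts - T t)) (at t within {0..r}))"
  by (simp add: batch_solution_def arrhenius_def mult.assoc)

lemma batch_solution_restrict:
  assumes "batch_solution J1 J2 k1 k2 h E1 E2 Ts r cA cB T" "s \<le> r"
  shows "batch_solution J1 J2 k1 k2 h E1 E2 Ts s cA cB T"
proof -
  have "{0..s} \<subseteq> {0..r}" using assms(2) by auto
  with assms(1) show ?thesis
    unfolding batch_solution_def by (blast intro: DERIV_subset)
qed

lemma batch_solution_cong_temperature:
  assumes "batch_solution J1 J2 k1 k2 h E1 E2 Ts r cA cB T'" "\<forall>t\<in>{0..r}. T t = T' t"
  shows "batch_solution J1 J2 k1 k2 h E1 E2 Ts r cA cB T"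
  using assms unfolding batch_solution_def has_field_derivative_def
  by (auto intro: has_derivative_transform)

lemma batch_solution_continuous_on:
  "batch_solution J1 J2 k1 k2 h E1 E2 Ts r cA cB T \<Longrightarrow> continuous_on {0..r} T"
  unfolding batch_solution_def continuous_on_eq_continuous_within
  by (meson DERIV_continuous)

lemma batch_solution_continuous_on_arrhenius:
  assumes "batch_solution J1 J2 k1 k2 h E1 E2 Ts r cA cB T" "\<forall>t\<in>{0..r}. T t > 0"
  shows "continuous_on {0..r} (\<lambda>t. arrhenius k E (T t))"
  using assms by (intro continuous_on_arrhenius batch_solution_continuous_on) force+

lemma batch_concentrations_if_temperature_pos:
  assumes sol: "batch_solution J1 J2 k1 k2 h E1 E2 Ts r cA cB T"
    and k: "k1 > 0" "k2 > 0"
    and init: "cA 0 > 0" "cB 0 > 0" and T_pos: "\<forall>t\<in>{0..r}. T t > 0"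
    and t: "t \<in> {0..r}"
  shows "0 < cA t \<and> cA t \<le> cA 0 \<and> 0 < cB t"
proof -
  define \<alpha> where "\<alpha> u = arrhenius k1 E1 (T u)" for u
  define \<beta> where "\<beta> u = arrhenius k2 E2 (T u)" for u
  have \<alpha>_pos: "\<alpha> u > 0" for u
    using k by (simp add: \<alpha>_def arrhenius_pos)
  have dA: "(cA has_real_derivative - \<alpha> u * cA u) (at u within {0..r})"
    and dB: "(cB has_real_derivative \<alpha> u * cA u - \<beta> u * cB u) (at u within {0..r})"
    if "u \<in> {0..r}" for u
    using sol that by (simp_all add: batch_solution_arrhenius \<alpha>_def \<beta>_def)
  have cont: "continuous_on {0..r} \<alpha>" "continuous_on {0..r} \<beta>"
    unfolding \<alpha>_def \<beta>_def using batch_solution_continuous_on_arrhenius[OF sol T_pos] by auto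
  have cA_pos: "cA u > 0" if "u \<in> {0..r}" for u
    by (rule pos_if_linear_diff_ineq[OF dA cont(1) _ _ that]) (use init in auto)
  have "cA 0 \<ge> cA t"
    using cA_pos \<alpha>_pos t
    by (intro DERIV_within_nonneg_imp_nondecreasing[where f = "\<lambda>u. - cA u", simplified])
      (auto intro!: derivative_eq_intros dA simp: less_imp_le)
  moreover have "cB t > 0"
    by (rule pos_if_linear_diff_ineq[OF dB cont(2) _ _ t])
      (use init cA_pos \<alpha>_pos in \<open>auto simp: less_imp_le\<close>)
  ultimately show ?thesis using cA_pos t by blast
qed

locale batch_reactor =
  fixes J1 J2 k1 k2 h E1 E2 Ts cAbar cBbar Tmin Tmax :: real
  assumes pos: "J1 > 0" "J2 > 0" "k1 > 0" "k2 > 0" "h > 0" "E1 > 0" "E2 > 0"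
    and cAbar: "cAbar > 0"
    and Tmin: "0 < Tmin" "Tmin \<le> Ts"
    and cBbar1: "E1 \<ge> E2 \<Longrightarrow> k1 / k2 * cAbar < cBbar"
    and cBbar2: "E1 < E2 \<Longrightarrow> k1 / k2 * exp ((E2 - E1) / Tmin) * cAbar < cBbar"
    and Tmax: "(J1 * k1 * cAbar + J2 * k2 * cBbar) / h + Ts \<le> Tmax"
begin

lemma arrhenius_ratio_bound:
  assumes "Tmin < \<theta>"
  shows "arrhenius k1 E1 \<theta> * cAbar < arrhenius k2 E2 \<theta> * cBbar"
proof -
  have "k1 * exp ((E2 - E1) / \<theta>) * cAbar < k2 * cBbar"
  proof (cases "E1 \<ge> E2")
    case True
    then have "exp ((E2 - E1) / \<theta>) \<le> 1" using assms Tmin by (simp add: divide_nonpos_pos)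
    then have "k1 * exp ((E2 - E1) / \<theta>) * cAbar \<le> k1 * cAbar" using pos cAbar by simp
    also have "\<dots> < k2 * cBbar" using cBbar1[OF True] pos by (simp add: field_simps)
    finally show ?thesis .
  next
    case False
    then have "exp ((E2 - E1) / \<theta>) \<le> exp ((E2 - E1) / Tmin)"
      using assms Tmin by (simp add: divide_left_mono)
    then have "k1 * exp ((E2 - E1) / \<theta>) * cAbar \<le> k1 * exp ((E2 - E1) / Tmin) * cAbar"
      using pos cAbar by simp
    also have "\<dots> < k2 * cBbar" using cBbar2 False pos by (simp add: field_simps)
    finally show ?thesis .
  qed
  then have "exp (- E2 / \<theta>) * (k1 * exp ((E2 - E1) / \<theta>) * cAbar) < exp (- E2 / \<theta>) * (k2 * cBbar)"
    by simp
  then show ?thesis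
    unfolding arrhenius_shift_activation[of k1 E1 _ E2] by (simp add: arrhenius_def algebra_simps)
qed

lemma bounds_if_temperature_pos:
  assumes sol: "batch_solution J1 J2 k1 k2 h E1 E2 Ts r cA cB T"
    and init: "cA 0 \<in> {0<..<cAbar}" "cB 0 \<in> {0<..<cBbar}" "T 0 \<in> {Tmin<..<Tmax}"
    and T_pos: "\<forall>t\<in>{0..r}. T t > 0"
    and t: "t \<in> {0..r}"
  shows "cA t \<in> {0<..<cAbar} \<and> cB t \<in> {0<..<cBbar} \<and> T t \<in> {Tmin<..<Tmax}"
proof -
  define \<alpha> where "\<alpha> u = arrhenius k1 E1 (T u)" for u
  define \<beta> where "\<beta> u = arrhenius k2 E2 (T u)" for u
  define P where "P u = J1 * \<alpha> u * cA u + J2 * \<beta> u * cB u" for u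
  have conc: "0 < cA u \<and> cA u < cAbar \<and> 0 < cB u" if "u \<in> {0..r}" for u
    using batch_concentrations_if_temperature_pos[OF sol pos(3,4) _ _ T_pos that] init by auto
  have dB: "(cB has_real_derivative \<alpha> u * cA u - \<beta> u * cB u) (at u within {0..r})"
    and dT: "(T has_real_derivative P u + h * (Ts - T u)) (at u within {0..r})"
    if "u \<in> {0..r}" for u
    using sol that by (simp_all add: batch_solution_arrhenius \<alpha>_def \<beta>_def P_def)
  have T_gt: "T u - Tmin > 0" if "u \<in> {0..r}" for u
  proof (rule pos_if_linear_diff_ineq[where g = "\<lambda>_. h", OF _ _ _ _ that])
    fix v assume v: "v \<in> {0..r}"
    have "P v > 0" using conc[OF v] pos by (simp add: P_def \<alpha>_def \<beta>_def arrhenius_pos add_pos_pos)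
    moreover have "h * Tmin \<le> h * Ts" using Tmin pos by simp
    ultimately show "P v + h * (Ts - T v) + h * (T v - Tmin) \<ge> 0" by (simp add: algebra_simps)
  qed (use init in \<open>auto intro!: derivative_eq_intros dT\<close>)
  have cB_lt: "cBbar - cB u > 0" if "u \<in> {0..r}" for u
  proof (rule pos_if_linear_diff_ineq[where g = \<beta>, OF _ _ _ _ that])
    show "continuous_on {0..r} \<beta>"
      unfolding \<beta>_def using batch_solution_continuous_on_arrhenius[OF sol T_pos] .
    fix v assume v: "v \<in> {0..r}"
    have "\<alpha> v * cA v \<le> \<alpha> v * cAbar" using conc[OF v] pos by (simp add: \<alpha>_def arrhenius_pos)
    also have "\<dots> < \<beta> v * cBbar" using T_gt[OF v] by (simp add: \<alpha>_def \<beta>_def arrhenius_ratio_bound)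
    finally show "- (\<alpha> v * cA v - \<beta> v * cB v) + \<beta> v * (cBbar - cB v) \<ge> 0"
      by (simp add: algebra_simps)
  qed (use init in \<open>auto intro!: derivative_eq_intros dB\<close>)
  have T_lt: "Tmax - T u > 0" if "u \<in> {0..r}" for u
  proof (rule pos_if_linear_diff_ineq[where g = "\<lambda>_. h", OF _ _ _ _ that])
    fix v assume v: "v \<in> {0..r}"
    have "\<alpha> v * cA v \<le> k1 * cAbar" "\<beta> v * cB v \<le> k2 * cBbar"
      using conc[OF v] cB_lt[OF v] T_pos v pos
      by (auto intro!: mult_mono simp: \<alpha>_def \<beta>_def arrhenius_le less_imp_le)
    with pos have "P v \<le> J1 * k1 * cAbar + J2 * k2 * cBbar"
      unfolding P_def mult.assoc by (intro add_mono mult_left_mono) auto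
    then have "P v \<le> h * (Tmax - Ts)" using Tmax pos by (simp add: field_simps)
    then show "- (P v + h * (Ts - T v)) + h * (Tmax - T v) \<ge> 0" by (simp add: algebra_simps)
  qed (use init in \<open>auto intro!: derivative_eq_intros dT\<close>)
  show ?thesis using conc T_gt cB_lt T_lt t by auto
qed

text \<open>The bounds above need \<open>T > 0\<close> (for the rates to be continuous); it is bootstrapped from
  \<open>T > Tmin\<close> on initial segments.\<close>

lemma invariant:
  assumes sol: "batch_solution J1 J2 k1 k2 h E1 E2 Ts r cA cB T"
    and init: "cA 0 \<in> {0<..<cAbar}" "cB 0 \<in> {0<..<cBbar}" "T 0 \<in> {Tmin<..<Tmax}"
    and t: "t \<in> {0..r}"
  shows "cA t \<in> {0<..<cAbar} \<and> cB t \<in> {0<..<cBbar} \<and> T t \<in> {Tmin<..<Tmax}"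
proof -
  have "T u > Tmin" if "u \<in> {0..r}" for u
  proof (rule continuous_on_stays_above[OF batch_solution_continuous_on[OF sol] Tmin(1) _ _ that])
    fix s assume s: "s \<in> {0..r}" and "\<forall>u\<in>{0..s}. T u > 0"
    with bounds_if_temperature_pos[OF batch_solution_restrict[OF sol] init, of s s]
    show "T s > Tmin" by auto
  qed (use init in auto)
  with Tmin have "\<forall>u\<in>{0..r}. T u > 0" by force
  from bounds_if_temperature_pos[OF sol init this t] show ?thesis .
qed

lemma deriv_exceeds_cooling:
  assumes sol: "batch_solution J1 J2 k1 k2 h E1 E2 Ts r cA cB T"
    and init: "cA 0 \<in> {0<..<cAbar}" "cB 0 \<in> {0<..<cBbar}" "T 0 \<in> {Tmin<..<Tmax}"
    and r: "0 < r" and t: "t \<in> {0..r}"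
    and dT: "(T has_real_derivative D) (at t within {0..r})"
  shows "D / h + T t > Ts"
proof -
  have "D = J1 * arrhenius k1 E1 (T t) * cA t + J2 * arrhenius k2 E2 (T t) * cB t + h * (Ts - T t)"
    using dT sol t at_within_Icc_nontrivial[OF r t]
    unfolding batch_solution_arrhenius by (meson has_field_derivative_unique)
  moreover have "J1 * arrhenius k1 E1 (T t) * cA t + J2 * arrhenius k2 E2 (T t) * cB t > 0"
    using invariant[OF sol init t] pos by (simp add: arrhenius_pos add_pos_pos)
  ultimately show ?thesis using pos by (simp add: field_simps)
qed

end

lemma heat_release_eq_if_same_temperature:
  assumes sol1: "batch_solution J1 J2 k1 k2 h E1 E2 Ts r cA cB T"
    and sol2: "batch_solution J1 J2 k1 k2 h E1 E2 Ts r cA' cB' T"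
    and r: "0 < r" and t: "t \<in> {0..r}"
  shows "J1 * arrhenius k1 E1 (T t) * (cA t - cA' t) + J2 * arrhenius k2 E2 (T t) * (cB t - cB' t) = 0"
proof -
  have "J1 * arrhenius k1 E1 (T t) * cA t + J2 * arrhenius k2 E2 (T t) * cB t + h * (Ts - T t)
      = J1 * arrhenius k1 E1 (T t) * cA' t + J2 * arrhenius k2 E2 (T t) * cB' t + h * (Ts - T t)"
    using sol1 sol2 t at_within_Icc_nontrivial[OF r t]
    unfolding batch_solution_arrhenius by (meson has_field_derivative_unique)
  then show ?thesis by (simp add: algebra_simps)
qed

lemma initial_cA_ne_if_same_temperature:
  assumes sol1: "batch_solution J1 J2 k1 k2 h E1 E2 Ts r cA cB T"
    and sol2: "batch_solution J1 J2 k1 k2 h E1 E2 Ts r cA' cB' T"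
    and r: "0 < r" and pos: "J2 > 0" "k2 > 0"
    and distinct: "(cA 0, cB 0) \<noteq> (cA' 0, cB' 0)"
  shows "cA 0 \<noteq> cA' 0"
proof
  assume "cA 0 = cA' 0"
  with heat_release_eq_if_same_temperature[OF sol1 sol2 r, of 0] r
  have "J2 * arrhenius k2 E2 (T 0) * (cB 0 - cB' 0) = 0" by simp
  with pos arrhenius_pos[of k2 E2 "T 0"] have "cB 0 = cB' 0" by simp
  with \<open>cA 0 = cA' 0\<close> distinct show False by simp
qed

lemma initial_cA_eq_if_same_temperature_equal_activation:
  assumes sol1: "batch_solution J1 J2 k1 k2 h E E Ts r cA cB T"
    and sol2: "batch_solution J1 J2 k1 k2 h E E Ts r cA' cB' T"
    and r: "0 < r" and k1: "k1 > 0" and rates: "(J1 + J2) * k2 \<noteq> J1 * k1"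
  shows "cA 0 = cA' 0"
proof -
  define x where "x u = cA u - cA' u" for u
  define y where "y u = cB u - cB' u" for u
  define e where "e u = exp (- E / T u)" for u
  define \<phi> where "\<phi> u = J1 * k1 * x u + J2 * k2 * y u" for u
  have 0: "0 \<in> {0..r}" using r by simp
  have \<phi>_zero: "\<phi> u = 0" if "u \<in> {0..r}" for u
  proof -
    have "e u * \<phi> u = 0"
      using heat_release_eq_if_same_temperature[OF sol1 sol2 r that]
      by (simp add: \<phi>_def x_def y_def e_def arrhenius_def algebra_simps)
    then show ?thesis by (simp add: e_def)
  qed
  have "(\<phi> has_real_derivative
          J1 * k1 * (- (k1 * e 0) * x 0) + J2 * k2 * (k1 * e 0 * x 0 - k2 * e 0 * y 0)) (at 0 within {0..r})"
    using sol1 sol2 0 unfolding \<phi>_def x_def y_def e_def batch_solution_arrhenius arrhenius_def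
    by (auto intro!: derivative_eq_intros simp: algebra_simps)
  moreover have "(\<phi> has_real_derivative 0) (at 0 within {0..r})"
    by (rule has_field_derivative_transform_within[OF DERIV_const zero_less_one 0]) (simp add: \<phi>_zero)
  ultimately have "J1 * k1 * (- (k1 * e 0) * x 0) + J2 * k2 * (k1 * e 0 * x 0 - k2 * e 0 * y 0) = 0"
    using at_within_Icc_nontrivial[OF r 0] by (rule has_field_derivative_unique)
  then have "e 0 * k1 * x 0 * ((J1 + J2) * k2 - J1 * k1) = k2 * e 0 * \<phi> 0"
    by (simp add: \<phi>_def algebra_simps)
  then have "e 0 * k1 * x 0 * ((J1 + J2) * k2 - J1 * k1) = 0"
    using \<phi>_zero[OF 0] by simp
  with k1 rates show ?thesis by (simp add: e_def x_def)
qed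

text \<open>Here \<open>a, b\<close> are the two rates, \<open>x, y\<close> the concentration differences and \<open>q = T' / T\<^sup>2\<close>;
  the second hypothesis is the derivative of the first one.\<close>

lemma solve_heat_release_deriv:
  fixes J1 J2 E1 E2 a b x y q :: real
  assumes \<psi>: "J1 * a * x + J2 * b * y = 0"
    and d\<psi>: "J1 * (a * (E1 * q) * x - a * (a * x)) + J2 * (b * (E2 * q) * y + b * (a * x - b * y)) = 0"
    and ne: "a * x \<noteq> 0" "J1 \<noteq> 0" "E1 \<noteq> E2"
  shows "q = ((J1 + J2) * b - J1 * a) / ((E2 - E1) * J1)"
proof -
  have "a * x * (J1 * (E1 - E2) * q - J1 * a + (J1 + J2) * b)
      = J1 * (a * (E1 * q) * x - a * (a * x)) + J2 * (b * (E2 * q) * y + b * (a * x - b * y))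
        - (E2 * q - b) * (J1 * a * x + J2 * b * y)"
    by (simp add: algebra_simps)
  also have "\<dots> = 0" using \<psi> d\<psi> by simp
  finally have "J1 * (E1 - E2) * q = J1 * a - (J1 + J2) * b" using ne(1) by simp
  with ne(2,3) show ?thesis by (simp add: field_simps)
qed

lemma reactor_G_deriv_if_same_temperature:
  assumes sol1: "batch_solution J1 J2 k1 k2 h E1 E2 Ts r cA cB T"
    and sol2: "batch_solution J1 J2 k1 k2 h E1 E2 Ts r cA' cB' T"
    and r: "0 < r" and J1: "J1 \<noteq> 0" and k1: "k1 > 0" and E: "E1 \<noteq> E2"
    and T_pos: "\<forall>t\<in>{0..r}. T t > 0" and cA0: "cA 0 \<noteq> cA' 0"
    and t: "t \<in> {0..r}"
  shows "(T has_real_derivative reactor_G J1 J2 k1 k2 E1 E2 (T t)) (at t within {0..r})"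
proof -
  define \<alpha> where "\<alpha> u = arrhenius k1 E1 (T u)" for u
  define \<beta> where "\<beta> u = arrhenius k2 E2 (T u)" for u
  define x where "x u = cA u - cA' u" for u
  define y where "y u = cB u - cB' u" for u
  define D where "D = J1 * \<alpha> t * cA t + J2 * \<beta> t * cB t + h * (Ts - T t)"
  define q where "q = D / T t ^ 2"
  have \<psi>_zero: "J1 * \<alpha> u * x u + J2 * \<beta> u * y u = 0" if "u \<in> {0..r}" for u
    using heat_release_eq_if_same_temperature[OF sol1 sol2 r that] by (simp add: \<alpha>_def \<beta>_def x_def y_def)
  have dx: "(x has_real_derivative - \<alpha> u * x u) (at u within {0..r})"
    and dy: "(y has_real_derivative \<alpha> u * x u - \<beta> u * y u) (at u within {0..r})"
    if "u \<in> {0..r}" for u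
    using sol1 sol2 that unfolding batch_solution_arrhenius \<alpha>_def \<beta>_def x_def y_def
    by (auto intro!: derivative_eq_intros simp: algebra_simps)
  have dT: "(T has_real_derivative D) (at t within {0..r})"
    using sol1 t by (simp add: batch_solution_arrhenius \<alpha>_def \<beta>_def D_def)
  have T_ne: "T t \<noteq> 0" using T_pos t by force
  have d\<alpha>: "(\<alpha> has_real_derivative \<alpha> t * (E1 * q)) (at t within {0..r})"
    and d\<beta>: "(\<beta> has_real_derivative \<beta> t * (E2 * q)) (at t within {0..r})"
    using has_real_derivative_arrhenius[OF dT T_ne]
    by (simp_all add: \<alpha>_def[abs_def] \<beta>_def[abs_def] q_def)
  have "((\<lambda>u. J1 * \<alpha> u * x u + J2 * \<beta> u * y u) has_real_derivative
          J1 * (\<alpha> t * (E1 * q) * x t - \<alpha> t * (\<alpha> t * x t))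
          + J2 * (\<beta> t * (E2 * q) * y t + \<beta> t * (\<alpha> t * x t - \<beta> t * y t))) (at t within {0..r})"
    using d\<alpha> d\<beta> dx[OF t] dy[OF t] by (auto intro!: derivative_eq_intros simp: algebra_simps)
  moreover have "((\<lambda>u. J1 * \<alpha> u * x u + J2 * \<beta> u * y u) has_real_derivative 0) (at t within {0..r})"
    by (rule has_field_derivative_transform_within[OF DERIV_const zero_less_one t]) (simp add: \<psi>_zero)
  ultimately have d\<psi>: "J1 * (\<alpha> t * (E1 * q) * x t - \<alpha> t * (\<alpha> t * x t))
          + J2 * (\<beta> t * (E2 * q) * y t + \<beta> t * (\<alpha> t * x t - \<beta> t * y t)) = 0"
    using at_within_Icc_nontrivial[OF r t] by (rule has_field_derivative_unique)
  have "x t \<noteq> 0"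
    using nonzero_if_linear_ode[OF dx _ _ t] batch_solution_continuous_on_arrhenius[OF sol1 T_pos] cA0
    by (simp add: x_def \<alpha>_def)
  then have "\<alpha> t * x t \<noteq> 0" using k1 by (simp add: \<alpha>_def arrhenius_pos less_imp_neq[symmetric])
  from solve_heat_release_deriv[OF \<psi>_zero[OF t] d\<psi> this J1 E]
  have "D = T t ^ 2 / ((E2 - E1) * J1) * ((J1 + J2) * \<beta> t - J1 * \<alpha> t)"
    using T_ne by (simp add: q_def field_simps)
  with dT show ?thesis by (simp add: reactor_G_arrhenius \<alpha>_def \<beta>_def)
qed

theorem mainTheorem5:
  fixes J1 J2 k1 k2 h E1 E2 Ts cAbar cBbar Tmin Tmax a r :: real
  assumes pos: "J1 > 0" "J2 > 0" "k1 > 0" "k2 > 0" "h > 0" "E1 > 0" "E2 > 0" "Ts > 0"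
    and cAbar: "cAbar > 0"
    and Tmin: "0 < Tmin" "Tmin \<le> Ts"
    and cBbar1: "E1 \<ge> E2 \<Longrightarrow> k1 / k2 * cAbar < cBbar"
    and cBbar2: "E1 < E2 \<Longrightarrow> k1 / k2 * exp ((E2 - E1) / Tmin) * cAbar < cBbar"
    and Tmax: "(J1 * k1 * cAbar + J2 * k2 * cBbar) / h + Ts \<le> Tmax"
    and hyp: "if E1 = E2 then (J1 + J2) * k2 \<noteq> J1 * k1
              else a > 0 \<and>
                ((\<forall>\<theta>\<in>{Tmin<..<Tmax}.
                    reactor_G J1 J2 k1 k2 E1 E2 \<theta> / h + \<theta> > Ts \<longrightarrow> reactor_G J1 J2 k1 k2 E1 E2 \<theta> \<le> - a)
                 \<or> (\<forall>\<theta>\<in>{Tmin<..<Tmax}.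
                    reactor_G J1 J2 k1 k2 E1 E2 \<theta> / h + \<theta> > Ts \<longrightarrow> reactor_G J1 J2 k1 k2 E1 E2 \<theta> \<ge> a))"
    and hr: "if E1 = E2 then r > 0 else r \<ge> (Tmax - Tmin) / a"
    and sol1: "batch_solution J1 J2 k1 k2 h E1 E2 Ts r cA cB T"
    and sol2: "batch_solution J1 J2 k1 k2 h E1 E2 Ts r cA' cB' T'"
    and init1: "cA 0 \<in> {0<..<cAbar}" "cB 0 \<in> {0<..<cBbar}" "T 0 \<in> {Tmin<..<Tmax}"
    and init2: "cA' 0 \<in> {0<..<cAbar}" "cB' 0 \<in> {0<..<cBbar}" "T' 0 \<in> {Tmin<..<Tmax}"
    and distinct: "(cA 0, cB 0, T 0) \<noteq> (cA' 0, cB' 0, T' 0)"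
  shows "\<exists>t\<in>{0..r}. T t \<noteq> T' t"
proof (rule ccontr)
  assume "\<not> (\<exists>t\<in>{0..r}. T t \<noteq> T' t)"
  then have same: "\<forall>t\<in>{0..r}. T t = T' t" by blast
  interpret batch_reactor J1 J2 k1 k2 h E1 E2 Ts cAbar cBbar Tmin Tmax
    using pos cAbar Tmin cBbar1 cBbar2 Tmax by unfold_locales auto
  have r: "r > 0"
  proof (cases "E1 = E2")
    case False
    with hyp init1(3) have "(Tmax - Tmin) / a > 0" by simp
    with hr False show ?thesis by simp
  qed (use hr in simp)
  have sol2': "batch_solution J1 J2 k1 k2 h E1 E2 Ts r cA' cB' T"
    using batch_solution_cong_temperature[OF sol2 same] .
  have cA0: "cA 0 \<noteq> cA' 0"
    using initial_cA_ne_if_same_temperature[OF sol1 sol2' r pos(2,4)] distinct same r by auto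
  show False
  proof (cases "E1 = E2")
    case True
    with initial_cA_eq_if_same_temperature_equal_activation sol1 sol2' r pos(3) hyp cA0 show False
      by auto
  next
    case False
    with hyp hr have r_ge: "Tmax - Tmin \<le> a * r"
      by (auto simp: pos_divide_le_eq mult.commute)
    have T_in: "T t \<in> {Tmin<..<Tmax}" if "t \<in> {0..r}" for t
      using invariant[OF sol1 init1 that] by blast
    have dT: "(T has_real_derivative reactor_G J1 J2 k1 k2 E1 E2 (T t)) (at t within {0..r})"
      if "t \<in> {0..r}" for t
      using reactor_G_deriv_if_same_temperature[OF sol1 sol2' r _ pos(3) False _ cA0 that] pos(1) T_in Tmin
      by force
    have "(\<forall>t\<in>{0..r}. reactor_G J1 J2 k1 k2 E1 E2 (T t) \<le> - a) \<or>
          (\<forall>t\<in>{0..r}. reactor_G J1 J2 k1 k2 E1 E2 (T t) \<ge> a)"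
      using hyp False T_in deriv_exceeds_cooling[OF sol1 init1 r _ dT] by fastforce
    from range_ge_if_deriv_bounded_away[OF dT this] r have "a * r \<le> \<bar>T r - T 0\<bar>" by simp
    moreover have "\<bar>T r - T 0\<bar> < Tmax - Tmin" using T_in[of r] T_in[of 0] r by auto
    ultimately show False using r_ge by simp
  qed
qed

end
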